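(* Assume $C_L<C_R$ and consider a wave sequence $U_L\xrightarrow{S_1}U_1\xrightarrow{C}U_2\xrightarrow{S_2}U_R$ with $U_L\ne U_R$, consisting of an admissible $S$-wave, an admissible $C$-wave and an admissible $S$-wave. This sequence is compatible if and only if $U_L\in\mathcal{R}$, $U_1\in\mathcal{T}$, $U_2\in\mathcal{L}$ and $0\le S_R\le S^k(U_2)$.
   Context: System: $\partial_t S+\partial_x f(S,C)=0$, $\partial_t[(S+\mathcal{A})C]+\partial_x[f(S,C)C]=0$, with $\mathcal{A}>0$ constant and states $U=(S,C)\in[0,1]^2$. The flux $f$ satisfies: (a) $f\in\mathscr{C}^2$, $f(0,C)=0$, $f(1,C)=1$, $\partial_Sf(0,C)=\partial_Sf(1,C)=0$; (b) for each $C$, $f(\cdot,C)$ is strictly increasing and S-shaped with a single inflection point (convex then concave); (c) $\partial_Cf>0$ for $0<S<1$. Eigenvalues: $\lambda_C(S,C)=f(S,C)/(S+\mathcal{A})$, $\lambda_S(S,C)=\partial_Sf(S,C)$. Transition curve $\mathcal{T}=\{\lambda_S=\lambda_C\}$, $\mathcal{L}=\{\lambda_S>\lambda_C\}$, $\mathcal{R}=\{\lambda_S<\lambda_C\}$; for each $C$, $\mathcal{T}$ contains exactly one point $(S^*(C),C)$ with $S^*(C)\in(0,1)$. For a state $U=(S,C)$, $S^k(U)$ denotes the value $S'\in[0,1]$, $S'\ne S$, with $\lambda_C(S',C)=\lambda_C(U)$; $S^k(U)=+\infty$ if no such $S'$ exists, and $S^k(U)=S^*(C)$ if $S=S^*(C)$.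 An $S$-wave from $U_a$ to $U_b$ requires $C_a=C_b=C$ and is the solution of the scalar Riemann problem $\partial_tS+\partial_xf(S,C)=0$ with left state $S_a$, right state $S_b$, built from shocks satisfying Oleinik's entropy condition and rarefactions; its initial velocity $v_i$ and final velocity $v_f$ are the smallest and largest propagation speeds in that fan. A $C$-wave from $U_a$ to $U_b$ is a contact discontinuity with $\lambda_C(U_a)=\lambda_C(U_b)$, speed $v_i=v_f=\lambda_C(U_a)$; it is admissible iff $U_a,U_b$ both lie in $\mathcal{L}\cup\mathcal{T}$ or both in $\mathcal{R}\cup\mathcal{T}$. A wave sequence is compatible iff for each pair of consecutive waves $a$ then $b$, $v_f^a\le v_i^b$. *)

theory Defs
  imports "HOL-Analysis.Analysis"
begin

definition C2_on :: "(real \<times> real) set \<Rightarrow> (real \<times> real \<Rightarrow> real) \<Rightarrow> bool" where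
  "C2_on U g \<longleftrightarrow> open U \<and>
     (\<exists>(g' :: real \<times> real \<Rightarrow> (real \<times> real) \<Rightarrow>\<^sub>L real)
        (g'' :: real \<times> real \<Rightarrow> (real \<times> real) \<Rightarrow>\<^sub>L ((real \<times> real) \<Rightarrow>\<^sub>L real)).
        (\<forall>x\<in>U. (g has_derivative blinfun_apply (g' x)) (at x)) \<and>
        (\<forall>x\<in>U. (g' has_derivative blinfun_apply (g'' x)) (at x)) \<and>
        continuous_on U g'')"

definition strict_convex_on :: "real set \<Rightarrow> (real \<Rightarrow> real) \<Rightarrow> bool" where
  "strict_convex_on I g \<longleftrightarrow> convex I \<and>
     (\<forall>x\<in>I. \<forall>y\<in>I. x \<noteq> y \<longrightarrow> (\<forall>u. 0 < u \<and> u < 1 \<longrightarrow>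
        g (u * x + (1 - u) * y) < u * g x + (1 - u) * g y))"

definition strict_concave_on :: "real set \<Rightarrow> (real \<Rightarrow> real) \<Rightarrow> bool" where
  "strict_concave_on I g \<longleftrightarrow> strict_convex_on I (\<lambda>x. - g x)"

definition flux_ok :: "(real \<Rightarrow> real \<Rightarrow> real) \<Rightarrow> bool" where
  "flux_ok f \<longleftrightarrow>
     (\<exists>U. {0..1} \<times> {0..1} \<subseteq> U \<and> C2_on U (\<lambda>(s, c). f s c)) \<and>
     (\<forall>C\<in>{0..1}. f 0 C = 0 \<and> f 1 C = 1 \<and>
        deriv (\<lambda>s. f s C) 0 = 0 \<and> deriv (\<lambda>s. f s C) 1 = 0) \<and>
     (\<forall>C\<in>{0..1}. strict_mono_on {0..1} (\<lambda>s. f s C) \<and>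
        (\<exists>s0. 0 < s0 \<and> s0 < 1 \<and> strict_convex_on {0..s0} (\<lambda>s. f s C)
                              \<and> strict_concave_on {s0..1} (\<lambda>s. f s C))) \<and>
     (\<forall>S C. 0 < S \<and> S < 1 \<and> 0 \<le> C \<and> C \<le> 1 \<longrightarrow> deriv (\<lambda>c. f S c) C > 0)"

definition lamC :: "(real \<Rightarrow> real \<Rightarrow> real) \<Rightarrow> real \<Rightarrow> real \<Rightarrow> real \<Rightarrow> real" where
  "lamC f A S C = f S C / (S + A)"

definition lamS :: "(real \<Rightarrow> real \<Rightarrow> real) \<Rightarrow> real \<Rightarrow> real \<Rightarrow> real" where
  "lamS f S C = deriv (\<lambda>s. f s C) S"

definition inT :: "(real \<Rightarrow> real \<Rightarrow> real) \<Rightarrow> real \<Rightarrow> real \<times> real \<Rightarrow> bool" where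
  "inT f A U \<longleftrightarrow> lamS f (fst U) (snd U) = lamC f A (fst U) (snd U)"

definition inL :: "(real \<Rightarrow> real \<Rightarrow> real) \<Rightarrow> real \<Rightarrow> real \<times> real \<Rightarrow> bool" where
  "inL f A U \<longleftrightarrow> lamS f (fst U) (snd U) > lamC f A (fst U) (snd U)"

definition inR :: "(real \<Rightarrow> real \<Rightarrow> real) \<Rightarrow> real \<Rightarrow> real \<times> real \<Rightarrow> bool" where
  "inR f A U \<longleftrightarrow> lamS f (fst U) (snd U) < lamC f A (fst U) (snd U)"

definition transition_ok :: "(real \<Rightarrow> real \<Rightarrow> real) \<Rightarrow> real \<Rightarrow> bool" where
  "transition_ok f A \<longleftrightarrow>
     (\<forall>C\<in>{0..1}. \<exists>!S. 0 < S \<and> S < 1 \<and> inT f A (S, C))"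

definition Sstar :: "(real \<Rightarrow> real \<Rightarrow> real) \<Rightarrow> real \<Rightarrow> real \<Rightarrow> real" where
  "Sstar f A C = (THE S. 0 < S \<and> S < 1 \<and> inT f A (S, C))"

definition Sk :: "(real \<Rightarrow> real \<Rightarrow> real) \<Rightarrow> real \<Rightarrow> real \<times> real \<Rightarrow> ereal" where
  "Sk f A U =
     (let S = fst U; C = snd U in
      if S = Sstar f A C then ereal (Sstar f A C)
      else if (\<exists>S'\<in>{0..1}. S' \<noteq> S \<and> lamC f A S' C = lamC f A S C)
      then ereal (THE S'. S' \<in> {0..1} \<and> S' \<noteq> S \<and> lamC f A S' C = lamC f A S C)
      else \<infinity>)"

text \<open>The Oleinik-entropy solution of the
scalar Riemann problem with left state a and right state b has propagation speeds
given by the derivative of the lower convex envelope on [a,b] if a < b, and of the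
upper concave envelope on [b,a] if a > b.\<close>
definition lower_env :: "(real \<Rightarrow> real) \<Rightarrow> real \<Rightarrow> real \<Rightarrow> real \<Rightarrow> real" where
  "lower_env g a b x = Sup {m * x + q | m q. \<forall>y\<in>{a..b}. m * y + q \<le> g y}"

definition upper_env :: "(real \<Rightarrow> real) \<Rightarrow> real \<Rightarrow> real \<Rightarrow> real \<Rightarrow> real" where
  "upper_env g a b x = Inf {m * x + q | m q. \<forall>y\<in>{a..b}. g y \<le> m * y + q}"

text \<open>Initial (smallest) and final (largest) speed of the S-wave from a to b
for the scalar flux g.  The trivial case a = b is never used below.\<close>
definition Swave_vi :: "(real \<Rightarrow> real) \<Rightarrow> real \<Rightarrow> real \<Rightarrow> real" where
  "Swave_vi g a b =
     (if a < b then Lim (at_right a) (\<lambda>x. (lower_env g a b x - lower_env g a b a) / (x - a))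
      else if b < a then Lim (at_left a) (\<lambda>x. (upper_env g b a a - upper_env g b a x) / (a - x))
      else deriv g a)"

definition Swave_vf :: "(real \<Rightarrow> real) \<Rightarrow> real \<Rightarrow> real \<Rightarrow> real" where
  "Swave_vf g a b =
     (if a < b then Lim (at_left b) (\<lambda>x. (lower_env g a b b - lower_env g a b x) / (b - x))
      else if b < a then Lim (at_right b) (\<lambda>x. (upper_env g b a x - upper_env g b a b) / (x - b))
      else deriv g a)"

definition adm_Cwave :: "(real \<Rightarrow> real \<Rightarrow> real) \<Rightarrow> real \<Rightarrow> real \<times> real \<Rightarrow> real \<times> real \<Rightarrow> bool" where
  "adm_Cwave f A Ua Ub \<longleftrightarrow>
     lamC f A (fst Ua) (snd Ua) = lamC f A (fst Ub) (snd Ub) \<and>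
     ((inL f A Ua \<or> inT f A Ua) \<and> (inL f A Ub \<or> inT f A Ub) \<or>
      (inR f A Ua \<or> inT f A Ua) \<and> (inR f A Ub \<or> inT f A Ub))"

text \<open>Compatibility of U_L -S-> U_1 -C-> U_2 -S-> U_R: v_f of each wave is at most
v_i of the next; the C-wave speed is lamC(U_1).\<close>
definition compatible_SCS ::
  "(real \<Rightarrow> real \<Rightarrow> real) \<Rightarrow> real \<Rightarrow> real \<times> real \<Rightarrow> real \<times> real \<Rightarrow> real \<times> real \<Rightarrow> real \<times> real \<Rightarrow> bool" where
  "compatible_SCS f A UL U1 U2 UR \<longleftrightarrow>
     Swave_vf (\<lambda>s. f s (snd UL)) (fst UL) (fst U1) \<le> lamC f A (fst U1) (snd U1) \<and>
     lamC f A (fst U1) (snd U1) \<le> Swave_vi (\<lambda>s. f s (snd U2)) (fst U2) (fst UR)"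

end

theory Submission
  imports Defs
begin

text \<open>
  Along a level \<open>C\<close> the contact speed \<open>lamC = f / (S + A)\<close> has derivative
  \<open>(lamS - lamC) / (S + A)\<close>. This difference vanishes at \<open>S = 0\<close>, is negative at \<open>S = 1\<close>
  and has the single interior zero \<open>S*(C)\<close>, so \<open>lamC\<close> increases strictly on \<open>[0, S*]\<close> and
  decreases strictly on \<open>[S*, 1]\<close>; thus \<open>L = {0 < S < S*}\<close>, \<open>T = {0, S*}\<close>,
  \<open>R = {S* < S}\<close>.

  The speeds of an S-wave are one-sided derivatives of the convex (or concave) envelope of the
  flux at the end states, i.e. extreme chord slopes of the flux from the left state, resp. into the
  right state. Since \<open>f y - f x - lamC x * (y - x) = (y + A) * (lamC y - lamC x)\<close>, comparing
  such a chord slope with \<open>lamC\<close> at the end state amounts to comparing the values of \<open>lamC\<close> at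
  the two ends of the chord, so both compatibility inequalities become monotonicity conditions on
  \<open>lamC\<close> along the S-waves. By unimodality they force \<open>S*(CL) \<le> S1\<close> and \<open>S2 \<le> S*(CR)\<close>;
  as \<open>lamC(S, CL) < lamC(S*(CR), CR)\<close> for \<open>CL < CR\<close>, the common contact speed puts \<open>U2\<close>
  into \<open>L\<close>, admissibility then puts \<open>U1\<close> into \<open>T\<close>, and the conditions on the two S-waves
  reduce to \<open>S*(CL) < SL\<close> and \<open>SR \<le> S^k(U2)\<close>.
\<close>

section \<open>Speeds of an S-wave as extreme chord slopes\<close>

lemma affine_le_lower_env:
  assumes "x \<in> {a..b}" and "\<forall>y\<in>{a..b}. m * y + q \<le> g y"
  shows "m * x + q \<le> lower_env g a b x"
  unfolding lower_env_def
proof (rule cSup_upper)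
  show "bdd_above {m * x + q |m q. \<forall>y\<in>{a..b}. m * y + q \<le> g y}"
    using assms(1) by (auto intro!: bdd_aboveI[where M = "g x"])
qed (use assms in blast)

lemma lower_env_le:
  assumes "x \<in> {a..b}" and "\<forall>y\<in>{a..b}. m * y + q \<le> g y"
  shows "lower_env g a b x \<le> g x"
  unfolding lower_env_def by (rule cSup_least) (use assms in auto)

lemma convex_on_lower_env:
  assumes "\<forall>y\<in>{a..b}. m * y + q \<le> g y"
  shows "convex_on {a..b} (lower_env g a b)"
proof
  fix t x y :: real
  assume t: "0 < t" "t < 1" and xy: "x \<in> {a..b}" "y \<in> {a..b}"
  show "lower_env g a b ((1 - t) *\<^sub>R x + t *\<^sub>R y)
          \<le> (1 - t) * lower_env g a b x + t * lower_env g a b y"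
    unfolding lower_env_def [of g a b "(1 - t) *\<^sub>R x + t *\<^sub>R y"]
  proof (rule cSup_least)
    fix z assume "z \<in> {m * ((1 - t) *\<^sub>R x + t *\<^sub>R y) + q |m q. \<forall>y\<in>{a..b}. m * y + q \<le> g y}"
    then obtain m' q' where z: "z = m' * ((1 - t) *\<^sub>R x + t *\<^sub>R y) + q'"
      and minorant: "\<forall>y\<in>{a..b}. m' * y + q' \<le> g y" by blast
    have "z = (1 - t) * (m' * x + q') + t * (m' * y + q')"
      unfolding z by (simp add: algebra_simps)
    also have "\<dots> \<le> (1 - t) * lower_env g a b x + t * lower_env g a b y"
      using t affine_le_lower_env [OF xy(1) minorant] affine_le_lower_env [OF xy(2) minorant]
      by (intro add_mono mult_left_mono) auto
    finally show "z \<le> (1 - t) * lower_env g a b x + t * lower_env g a b y" .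
  qed (use assms in blast)
qed (rule convex_real_interval)

lemma upper_env_eq_uminus_lower_env:
  "upper_env g a b x = - lower_env (\<lambda>y. - g y) a b x"
proof -
  have "uminus ` {m * x + q |m q. \<forall>y\<in>{a..b}. g y \<le> m * y + q} =
      {m * x + q |m q. \<forall>y\<in>{a..b}. m * y + q \<le> - g y}"
  proof (intro equalityI subsetI)
    fix z assume "z \<in> uminus ` {m * x + q |m q. \<forall>y\<in>{a..b}. g y \<le> m * y + q}"
    then obtain m q where z: "z = - (m * x + q)" and "\<forall>y\<in>{a..b}. g y \<le> m * y + q" by blast
    then have "\<forall>y\<in>{a..b}. (- m) * y + (- q) \<le> - g y" by force
    moreover have "z = (- m) * x + (- q)" unfolding z by simp
    ultimately show "z \<in> {m * x + q |m q. \<forall>y\<in>{a..b}. m * y + q \<le> - g y}" by blast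
  next
    fix z assume "z \<in> {m * x + q |m q. \<forall>y\<in>{a..b}. m * y + q \<le> - g y}"
    then obtain m q where z: "z = m * x + q" and "\<forall>y\<in>{a..b}. m * y + q \<le> - g y" by blast
    then have "\<forall>y\<in>{a..b}. g y \<le> (- m) * y + (- q)" by force
    moreover have "- z = (- m) * x + (- q)" unfolding z by simp
    ultimately have "- z \<in> {m * x + q |m q. \<forall>y\<in>{a..b}. g y \<le> m * y + q}" by blast
    then show "z \<in> uminus ` {m * x + q |m q. \<forall>y\<in>{a..b}. g y \<le> m * y + q}"
      by (rule image_eqI [rotated]) simp
  qed
  then show ?thesis
    unfolding upper_env_def lower_env_def Inf_real_def image_image by simp
qed

lemma at_within_Ioc_at_right:
  fixes a b :: real
  assumes "a < b"
  shows "at a within {a<..b} = at_right a"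
proof -
  have "{a<..b} - {a} = {a..b} - {a}" by auto
  then show ?thesis using at_within_Icc_at_right [OF assms] unfolding at_within_def by simp
qed

lemma at_within_Ico_at_left:
  fixes a b :: real
  assumes "a < b"
  shows "at b within {a..<b} = at_left b"
proof -
  have "{a..<b} - {b} = {a..b} - {b}" by auto
  then show ?thesis using at_within_Icc_at_left [OF assms] unfolding at_within_def by simp
qed

lemma slope_swap: "(u - v) / (x - y) = (v - u) / (y - x)" for u v x y :: real
  by (metis minus_diff_eq minus_divide_divide)

text \<open>
  The line through \<open>(a, g a)\<close> whose slope is the infimum of the chord slopes from \<open>a\<close> is an
  affine minorant, so the envelope touches \<open>g\<close> at \<open>a\<close>; by convexity its difference quotients
  at \<open>a\<close> are monotone, and they are squeezed between that slope and the chord slopes.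
\<close>

lemma lower_env_right_slope_tendsto:
  fixes g :: "real \<Rightarrow> real"
  assumes ab: "a < b" and bdd: "bdd_below ((\<lambda>x. (g x - g a) / (x - a)) ` {a<..b})"
  shows "((\<lambda>x. (lower_env g a b x - lower_env g a b a) / (x - a))
           \<longlongrightarrow> (INF x\<in>{a<..b}. (g x - g a) / (x - a))) (at_right a)"
proof -
  let ?L = "lower_env g a b"
  define c where "c = (INF x\<in>{a<..b}. (g x - g a) / (x - a))"
  define D where "D x = (?L x - ?L a) / (x - a)" for x
  have c_le: "c \<le> (g x - g a) / (x - a)" if "x \<in> {a<..b}" for x
    unfolding c_def using bdd that by (rule cINF_lower)
  have minorant: "\<forall>y\<in>{a..b}. c * y + (g a - c * a) \<le> g y"
  proof
    fix y assume y: "y \<in> {a..b}"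
    show "c * y + (g a - c * a) \<le> g y"
    proof (cases "y = a")
      case False
      with y c_le [of y] have "c * (y - a) \<le> g y - g a" by (simp add: pos_le_divide_eq)
      then show ?thesis by (simp add: algebra_simps)
    qed simp
  qed
  have La: "?L a = g a"
    using affine_le_lower_env [OF _ minorant, of a] lower_env_le [OF _ minorant, of a] ab by simp
  have c_le_D: "c \<le> D x" if x: "x \<in> {a<..b}" for x
  proof -
    have "c * x + (g a - c * a) \<le> ?L x" using affine_le_lower_env [OF _ minorant] x by simp
    then show ?thesis using x unfolding D_def La by (simp add: pos_le_divide_eq algebra_simps)
  qed
  have D_le: "D x \<le> (g x - g a) / (x - a)" if x: "x \<in> {a<..b}" for x
    using lower_env_le [OF _ minorant, of x] x unfolding D_def La by (simp add: divide_right_mono)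
  have D_mono: "D x \<le> D y" if "a < x" "x \<le> y" "y \<le> b" for x y
  proof (cases "x = y")
    case False
    with that have "(?L a - ?L x) / (a - x) \<le> (?L a - ?L y) / (a - y)"
      by (intro convex_on_slope_le(1) [OF convex_on_lower_env [OF minorant]]) auto
    then show ?thesis unfolding D_def by (simp add: slope_swap [of "?L a"])
  qed simp
  have "(D \<longlongrightarrow> Inf (D ` ({a<..} \<inter> {a..b}))) (at a within ({a<..} \<inter> {a..b}))"
    by (rule Lim_right_bound) (use D_mono c_le_D in auto)
  moreover have "{a<..} \<inter> {a..b} = {a<..b}" by auto
  moreover have "Inf (D ` {a<..b}) = c"
  proof (rule antisym)
    have bdd_D: "bdd_below (D ` {a<..b})" using c_le_D by (rule bdd_belowI2)
    show "Inf (D ` {a<..b}) \<le> c"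
      unfolding c_def
    proof (rule cINF_greatest)
      fix x assume x: "x \<in> {a<..b}"
      have "Inf (D ` {a<..b}) \<le> D x" using bdd_D x by (rule cINF_lower)
      then show "Inf (D ` {a<..b}) \<le> (g x - g a) / (x - a)" using D_le [OF x] by linarith
    qed (use ab in simp)
    show "c \<le> Inf (D ` {a<..b})" using ab c_le_D by (intro cINF_greatest) auto
  qed
  ultimately show ?thesis unfolding D_def c_def by (simp add: at_within_Ioc_at_right [OF ab])
qed

lemma lower_env_left_slope_tendsto:
  fixes g :: "real \<Rightarrow> real"
  assumes ab: "a < b" and bdd: "bdd_above ((\<lambda>x. (g b - g x) / (b - x)) ` {a..<b})"
  shows "((\<lambda>x. (lower_env g a b b - lower_env g a b x) / (b - x))
           \<longlongrightarrow> (SUP x\<in>{a..<b}. (g b - g x) / (b - x))) (at_left b)"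
proof -
  let ?L = "lower_env g a b"
  define c where "c = (SUP x\<in>{a..<b}. (g b - g x) / (b - x))"
  define E where "E x = (?L b - ?L x) / (b - x)" for x
  have le_c: "(g b - g x) / (b - x) \<le> c" if "x \<in> {a..<b}" for x
    unfolding c_def using that bdd by (rule cSUP_upper)
  have minorant: "\<forall>y\<in>{a..b}. c * y + (g b - c * b) \<le> g y"
  proof
    fix y assume y: "y \<in> {a..b}"
    show "c * y + (g b - c * b) \<le> g y"
    proof (cases "y = b")
      case False
      with y le_c [of y] have "g b - g y \<le> c * (b - y)" by (simp add: pos_divide_le_eq)
      then show ?thesis by (simp add: algebra_simps)
    qed simp
  qed
  have Lb: "?L b = g b"
    using affine_le_lower_env [OF _ minorant, of b] lower_env_le [OF _ minorant, of b] ab by simp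
  have E_le_c: "E x \<le> c" if x: "x \<in> {a..<b}" for x
  proof -
    have "c * x + (g b - c * b) \<le> ?L x" using affine_le_lower_env [OF _ minorant] x by simp
    then show ?thesis using x unfolding E_def Lb by (simp add: pos_divide_le_eq algebra_simps)
  qed
  have le_E: "(g b - g x) / (b - x) \<le> E x" if x: "x \<in> {a..<b}" for x
    using lower_env_le [OF _ minorant, of x] x unfolding E_def Lb by (simp add: divide_right_mono)
  have E_mono: "E x \<le> E y" if "a \<le> x" "x \<le> y" "y < b" for x y
  proof (cases "x = y")
    case False
    with that have "(?L x - ?L b) / (x - b) \<le> (?L y - ?L b) / (y - b)"
      by (intro convex_on_slope_le(2) [OF convex_on_lower_env [OF minorant]]) auto
    then show ?thesis unfolding E_def by (simp add: slope_swap [of _ "?L b"])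
  qed simp
  have "(E \<longlongrightarrow> Sup (E ` ({..<b} \<inter> {a..b}))) (at b within ({..<b} \<inter> {a..b}))"
    by (rule Lim_left_bound) (use E_mono E_le_c in auto)
  moreover have "{..<b} \<inter> {a..b} = {a..<b}" by auto
  moreover have "Sup (E ` {a..<b}) = c"
  proof (rule antisym)
    show "Sup (E ` {a..<b}) \<le> c" using ab E_le_c by (intro cSUP_least) auto
    have bdd_E: "bdd_above (E ` {a..<b})" using E_le_c by (rule bdd_aboveI2)
    show "c \<le> Sup (E ` {a..<b})"
      unfolding c_def
    proof (rule cSUP_least)
      fix x assume x: "x \<in> {a..<b}"
      have "E x \<le> Sup (E ` {a..<b})" using x bdd_E by (rule cSUP_upper)
      then show "(g b - g x) / (b - x) \<le> Sup (E ` {a..<b})" using le_E [OF x] by linarith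
    qed (use ab in simp)
  qed
  ultimately show ?thesis unfolding E_def c_def by (simp add: at_within_Ico_at_left [OF ab])
qed

lemma uminus_SUP_uminus: "- (SUP x\<in>S. - h x) = (INF x\<in>S. h x :: real)"
  by (simp add: Inf_real_def image_image)

lemma uminus_INF_uminus: "- (INF x\<in>S. - h x) = (SUP x\<in>S. h x :: real)"
  by (simp add: Inf_real_def image_image)

lemma lipschitz_on_imp_bounded_slopes:
  fixes g :: "real \<Rightarrow> real"
  assumes "M-lipschitz_on X g" and "a \<in> X"
  shows "bounded ((\<lambda>x. (g x - g a) / (x - a)) ` X)"
  unfolding bounded_iff
proof (intro exI ballI)
  fix s assume "s \<in> (\<lambda>x. (g x - g a) / (x - a)) ` X"
  then obtain x where x: "x \<in> X" and s: "s = (g x - g a) / (x - a)" by blast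
  have "\<bar>g x - g a\<bar> \<le> M * \<bar>x - a\<bar>"
    using lipschitz_onD [OF assms(1) x assms(2)] by (simp add: dist_real_def)
  then show "norm s \<le> M"
    unfolding s using lipschitz_on_nonneg [OF assms(1)]
    by (cases "x = a") (simp_all add: abs_divide pos_divide_le_eq)
qed

lemma Swave_vi_eq_INF:
  fixes g :: "real \<Rightarrow> real"
  assumes "a \<noteq> b" and lip: "M-lipschitz_on (closed_segment a b) g"
  shows "Swave_vi g a b = (INF x\<in>closed_segment a b - {a}. (g x - g a) / (x - a))"
proof (cases "a < b")
  case True
  then have seg: "closed_segment a b - {a} = {a<..b}" by (auto simp: closed_segment_eq_real_ivl)
  have "bounded ((\<lambda>x. (g x - g a) / (x - a)) ` {a<..b})"
    by (rule bounded_subset [OF lipschitz_on_imp_bounded_slopes [OF lip ends_in_segment(1)]])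
      (use seg in auto)
  from lower_env_right_slope_tendsto [OF True bounded_imp_bdd_below [OF this]]
  show ?thesis unfolding Swave_vi_def seg using True by (simp add: tendsto_Lim)
next
  case False
  with assms(1) have ba: "b < a" by simp
  then have seg: "closed_segment a b - {a} = {b..<a}" by (auto simp: closed_segment_eq_real_ivl)
  have "bounded ((\<lambda>x. (- g x - - g a) / (x - a)) ` {b..<a})"
    by (rule bounded_subset [OF lipschitz_on_imp_bounded_slopes
          [OF lipschitz_on_minus [OF lip] ends_in_segment(1)]]) (use seg in auto)
  then have "bdd_above ((\<lambda>x. (- g a - - g x) / (a - x)) ` {b..<a})"
    unfolding slope_swap [of "- g a"] by (rule bounded_imp_bdd_above)
  from tendsto_minus [OF lower_env_left_slope_tendsto [OF ba this]]
  have "((\<lambda>x. (upper_env g b a a - upper_env g b a x) / (a - x))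
      \<longlongrightarrow> (INF x\<in>{b..<a}. (g x - g a) / (x - a))) (at_left a)"
    unfolding upper_env_eq_uminus_lower_env uminus_SUP_uminus [symmetric]
    by (simp add: minus_divide_left slope_swap [of "g _" "g a"])
  then show ?thesis unfolding Swave_vi_def seg using ba by (simp add: tendsto_Lim)
qed

lemma Swave_vf_eq_SUP:
  fixes g :: "real \<Rightarrow> real"
  assumes "a \<noteq> b" and lip: "M-lipschitz_on (closed_segment a b) g"
  shows "Swave_vf g a b = (SUP x\<in>closed_segment a b - {b}. (g x - g b) / (x - b))"
proof (cases "a < b")
  case True
  then have seg: "closed_segment a b - {b} = {a..<b}" by (auto simp: closed_segment_eq_real_ivl)
  have "bounded ((\<lambda>x. (g x - g b) / (x - b)) ` {a..<b})"
    by (rule bounded_subset [OF lipschitz_on_imp_bounded_slopes [OF lip ends_in_segment(2)]])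
      (use seg in auto)
  then have "bdd_above ((\<lambda>x. (g b - g x) / (b - x)) ` {a..<b})"
    unfolding slope_swap [of "g b"] by (rule bounded_imp_bdd_above)
  from lower_env_left_slope_tendsto [OF True this]
  show ?thesis
    unfolding Swave_vf_def seg using True by (simp add: tendsto_Lim slope_swap [of "g b"])
next
  case False
  with assms(1) have ba: "b < a" by simp
  then have seg: "closed_segment a b - {b} = {b<..a}" by (auto simp: closed_segment_eq_real_ivl)
  have "bounded ((\<lambda>x. (- g x - - g b) / (x - b)) ` {b<..a})"
    by (rule bounded_subset [OF lipschitz_on_imp_bounded_slopes
          [OF lipschitz_on_minus [OF lip] ends_in_segment(2)]]) (use seg in auto)
  from tendsto_minus [OF lower_env_right_slope_tendsto [OF ba bounded_imp_bdd_below [OF this]]]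
  have "((\<lambda>x. (upper_env g b a x - upper_env g b a b) / (x - b))
      \<longlongrightarrow> (SUP x\<in>{b<..a}. (g x - g b) / (x - b))) (at_right b)"
    unfolding upper_env_eq_uminus_lower_env uminus_INF_uminus [symmetric]
    by (simp add: minus_divide_left)
  then show ?thesis unfolding Swave_vf_def seg using ba by (simp add: tendsto_Lim)
qed

lemma Swave_vf_le_iff:
  fixes g :: "real \<Rightarrow> real"
  assumes "a \<noteq> b" and lip: "M-lipschitz_on (closed_segment a b) g"
  shows "Swave_vf g a b \<le> c \<longleftrightarrow> (\<forall>x\<in>closed_segment a b - {b}. (g x - g b) / (x - b) \<le> c)"
  unfolding Swave_vf_eq_SUP [OF assms]
proof (rule cSUP_le_iff)
  show "closed_segment a b - {b} \<noteq> {}" using assms(1) by auto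
  show "bdd_above ((\<lambda>x. (g x - g b) / (x - b)) ` (closed_segment a b - {b}))"
    by (rule bounded_imp_bdd_above,
        rule bounded_subset [OF lipschitz_on_imp_bounded_slopes [OF lip ends_in_segment(2)]]) auto
qed

lemma le_Swave_vi_iff:
  fixes g :: "real \<Rightarrow> real"
  assumes "a \<noteq> b" and lip: "M-lipschitz_on (closed_segment a b) g"
  shows "c \<le> Swave_vi g a b \<longleftrightarrow> (\<forall>x\<in>closed_segment a b - {a}. c \<le> (g x - g a) / (x - a))"
  unfolding Swave_vi_eq_INF [OF assms]
proof (rule le_cINF_iff)
  show "closed_segment a b - {a} \<noteq> {}" using assms(1) by auto
  show "bdd_below ((\<lambda>x. (g x - g a) / (x - a)) ` (closed_segment a b - {a}))"
    by (rule bounded_imp_bdd_below,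
        rule bounded_subset [OF lipschitz_on_imp_bounded_slopes [OF lip ends_in_segment(1)]]) auto
qed

section \<open>The contact speed along a level of the concentration\<close>

lemma has_field_derivative_partial_fst:
  fixes F :: "real \<Rightarrow> real \<Rightarrow> real"
  assumes "((\<lambda>(s, c). F s c) has_derivative D) (at (s, c))"
  shows "((\<lambda>s. F s c) has_real_derivative D (1, 0)) (at s)"
proof -
  have "((\<lambda>s. (s, c)) has_derivative (\<lambda>h. (h, 0))) (at s)"
    by (auto intro!: derivative_eq_intros)
  from diff_chain_at [OF this assms]
  have "((\<lambda>s. F s c) has_derivative (\<lambda>h. D (h, 0))) (at s)" by (simp add: o_def)
  then show ?thesis
  proof (rule has_derivative_imp_has_field_derivative)
    show "h * D (1, 0) = D (h, 0)" for h
      using linear_cmul [OF has_derivative_linear [OF assms], of h "(1, 0)"] by simp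
  qed
qed

lemma has_field_derivative_partial_snd:
  fixes F :: "real \<Rightarrow> real \<Rightarrow> real"
  assumes "((\<lambda>(s, c). F s c) has_derivative D) (at (s, c))"
  shows "((\<lambda>c. F s c) has_real_derivative D (0, 1)) (at c)"
proof -
  have "((\<lambda>c. (s, c)) has_derivative (\<lambda>h. (0, h))) (at c)"
    by (auto intro!: derivative_eq_intros)
  from diff_chain_at [OF this assms]
  have "((\<lambda>c. F s c) has_derivative (\<lambda>h. D (0, h))) (at c)" by (simp add: o_def)
  then show ?thesis
  proof (rule has_derivative_imp_has_field_derivative)
    show "h * D (0, 1) = D (0, h)" for h
      using linear_cmul [OF has_derivative_linear [OF assms], of h "(0, 1)"] by simp
  qed
qed

lemma flux_ok_C1:
  assumes "flux_ok f"
  obtains D :: "real \<times> real \<Rightarrow> (real \<times> real) \<Rightarrow>\<^sub>L real"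
  where "\<And>x. x \<in> {0..1} \<times> {0..1} \<Longrightarrow> ((\<lambda>(s, c). f s c) has_derivative blinfun_apply (D x)) (at x)"
    and "continuous_on ({0..1} \<times> {0..1}) D"
proof -
  obtain U where U: "{0..1} \<times> {0..1} \<subseteq> U" and "C2_on U (\<lambda>(s, c). f s c)"
    using assms unfolding flux_ok_def by blast
  then obtain D D' where D: "\<forall>x\<in>U. ((\<lambda>(s, c). f s c) has_derivative blinfun_apply (D x)) (at x)"
    and D': "\<forall>x\<in>U. (D has_derivative blinfun_apply (D' x)) (at x)"
    unfolding C2_on_def by blast
  have "continuous_on U D"
    using D' by (intro continuous_at_imp_continuous_on ballI has_derivative_continuous) blast
  with U D show ?thesis by (intro that continuous_on_subset [OF _ U]) auto
qed

lemma slope_minus_lamC: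
  assumes "x + A \<noteq> 0" and "y + A \<noteq> 0" and "x \<noteq> y"
  shows "(f y C - f x C) / (y - x) - lamC f A x C
           = (y + A) * (lamC f A y C - lamC f A x C) / (y - x)"
proof -
  have "(y + A) * (lamC f A y C - lamC f A x C)
      = (y + A) * lamC f A y C - (x + A) * lamC f A x C - (y - x) * lamC f A x C"
    by (simp add: algebra_simps)
  also have "\<dots> = (f y C - f x C) - (y - x) * lamC f A x C"
    using assms(1,2) unfolding lamC_def by simp
  moreover have "y - x \<noteq> 0" using assms(3) by simp
  ultimately show ?thesis by (simp add: diff_divide_distrib)
qed

lemma slope_le_lamC_iff:
  assumes "0 < x + A" and "0 < y + A" and "x \<noteq> y"
  shows "(f y C - f x C) / (y - x) \<le> lamC f A x C
           \<longleftrightarrow> (lamC f A y C - lamC f A x C) * (y - x) \<le> 0"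
proof -
  have "(f y C - f x C) / (y - x) \<le> lamC f A x C
          \<longleftrightarrow> (y + A) * (lamC f A y C - lamC f A x C) / (y - x) \<le> 0"
    using slope_minus_lamC [of x A y f C] assms by linarith
  also have "\<dots> \<longleftrightarrow> (lamC f A y C - lamC f A x C) * (y - x) \<le> 0"
    using assms by (simp add: divide_le_0_iff mult_le_0_iff zero_le_mult_iff)
  finally show ?thesis .
qed

lemma lamC_le_slope_iff:
  assumes "0 < x + A" and "0 < y + A" and "x \<noteq> y"
  shows "lamC f A x C \<le> (f y C - f x C) / (y - x)
           \<longleftrightarrow> 0 \<le> (lamC f A y C - lamC f A x C) * (y - x)"
proof -
  have "lamC f A x C \<le> (f y C - f x C) / (y - x)
          \<longleftrightarrow> 0 \<le> (y + A) * (lamC f A y C - lamC f A x C) / (y - x)"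
    using slope_minus_lamC [of x A y f C] assms by linarith
  also have "\<dots> \<longleftrightarrow> 0 \<le> (lamC f A y C - lamC f A x C) * (y - x)"
    using assms by (simp add: zero_le_divide_iff zero_le_mult_iff mult_le_0_iff)
  finally show ?thesis .
qed

lemma continuous_on_nonzero_same_sign:
  fixes d :: "real \<Rightarrow> real"
  assumes "x \<le> y" and "continuous_on {x..y} d" and "\<forall>z\<in>{x..y}. d z \<noteq> 0"
  shows "0 < d x \<longleftrightarrow> 0 < d y"
proof
  assume "0 < d x"
  show "0 < d y"
  proof (rule ccontr)
    assume "\<not> 0 < d y"
    with IVT2' [of d y 0 x, OF _ _ assms(1,2)] \<open>0 < d x\<close> assms(3) show False by force
  qed
next
  assume "0 < d y"
  show "0 < d x"
  proof (rule ccontr)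
    assume "\<not> 0 < d x"
    with IVT' [of d x 0 y, OF _ _ assms(1,2)] \<open>0 < d y\<close> assms(3) show False by force
  qed
qed

locale flux =
  fixes f :: "real \<Rightarrow> real \<Rightarrow> real" and A :: real
  assumes A_pos: "0 < A" and flux_ok: "flux_ok f" and transition_ok: "transition_ok f A"
begin

lemma f_0: "C \<in> {0..1} \<Longrightarrow> f 0 C = 0"
  and f_1: "C \<in> {0..1} \<Longrightarrow> f 1 C = 1"
  and lamS_0: "C \<in> {0..1} \<Longrightarrow> lamS f 0 C = 0"
  and lamS_1: "C \<in> {0..1} \<Longrightarrow> lamS f 1 C = 0"
  using flux_ok unfolding flux_ok_def lamS_def by auto

lemma f_strict_mono: "C \<in> {0..1} \<Longrightarrow> strict_mono_on {0..1} (\<lambda>s. f s C)"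
  using flux_ok unfolding flux_ok_def by blast

lemma has_lamS_derivative:
  assumes "C \<in> {0..1}" and "S \<in> {0..1}"
  shows "((\<lambda>s. f s C) has_real_derivative lamS f S C) (at S)"
proof -
  obtain D where "((\<lambda>(s, c). f s c) has_derivative blinfun_apply (D (S, C))) (at (S, C))"
    using flux_ok_C1 [OF flux_ok] assms by (metis mem_Sigma_iff)
  from has_field_derivative_partial_fst [OF this]
  show ?thesis unfolding lamS_def by (simp add: DERIV_imp_deriv)
qed

lemma continuous_on_lamS: "C \<in> {0..1} \<Longrightarrow> continuous_on {0..1} (\<lambda>S. lamS f S C)"
proof -
  assume C: "C \<in> {0..1}"
  obtain D where D: "\<And>x. x \<in> {0..1} \<times> {0..1} \<Longrightarrow>
      ((\<lambda>(s, c). f s c) has_derivative blinfun_apply (D x)) (at x)"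
    and cont: "continuous_on ({0..1} \<times> {0..1}) D"
    using flux_ok_C1 [OF flux_ok] by blast
  have "continuous_on {0..1} (\<lambda>S. blinfun_apply (D (S, C)) (1, 0))"
    using C by (intro continuous_intros continuous_on_compose2 [OF cont]) auto
  then show ?thesis
  proof (rule continuous_on_eq)
    fix S :: real assume "S \<in> {0..1}"
    with C have "((\<lambda>s. f s C) has_real_derivative blinfun_apply (D (S, C)) (1, 0)) (at S)"
      by (intro has_field_derivative_partial_fst D) simp
    then show "blinfun_apply (D (S, C)) (1, 0) = lamS f S C"
      unfolding lamS_def by (simp add: DERIV_imp_deriv)
  qed
qed

lemma continuous_on_f: "C \<in> {0..1} \<Longrightarrow> continuous_on {0..1} (\<lambda>s. f s C)"
  using has_lamS_derivative by (intro continuous_at_imp_continuous_on ballI DERIV_isCont) blast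

lemma lipschitz_on_f: "C \<in> {0..1} \<Longrightarrow> \<exists>M. M-lipschitz_on {0..1} (\<lambda>s. f s C)"
proof -
  assume C: "C \<in> {0..1}"
  obtain B where B: "\<forall>S\<in>{0..1}. norm (lamS f S C) \<le> B"
    using compact_imp_bounded [OF compact_continuous_image [OF continuous_on_lamS [OF C]]]
    unfolding bounded_iff by auto
  have "B-lipschitz_on {0..1} (\<lambda>s. f s C)"
  proof (rule lipschitz_onI)
    fix x y :: real assume "x \<in> {0..1}" "y \<in> {0..1}"
    then have "norm (f x C - f y C) \<le> B * norm (x - y)"
      using B has_lamS_derivative [OF C]
      by (intro field_differentiable_bound [where f' = "\<lambda>S. lamS f S C" and S = "{0..1}"])
        (auto intro: has_field_derivative_at_within)
    then show "dist (f x C) (f y C) \<le> B * dist x y" by (simp add: dist_real_def)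
  next
    show "0 \<le> B" using B norm_ge_zero [of "lamS f 0 C"] by fastforce
  qed
  then show ?thesis by blast
qed

lemma f_strict_mono_C:
  assumes "0 < S" "S < 1" and "C1 \<in> {0..1}" "C2 \<in> {0..1}" "C1 < C2"
  shows "f S C1 < f S C2"
proof (rule DERIV_pos_imp_increasing [OF assms(5)])
  fix c assume c: "C1 \<le> c" "c \<le> C2"
  then have "c \<in> {0..1}" using assms(3,4) by auto
  obtain D where "((\<lambda>(s, c). f s c) has_derivative blinfun_apply (D (S, c))) (at (S, c))"
    using flux_ok_C1 [OF flux_ok] \<open>c \<in> {0..1}\<close> assms(1,2)
    by (metis atLeastAtMost_iff less_eq_real_def mem_Sigma_iff)
  from has_field_derivative_partial_snd [OF this]
  have "((\<lambda>c. f S c) has_real_derivative deriv (\<lambda>c. f S c) c) (at c)" by (simp add: DERIV_imp_deriv)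
  moreover have "0 < deriv (\<lambda>c. f S c) c"
    using flux_ok \<open>c \<in> {0..1}\<close> assms(1,2) unfolding flux_ok_def by auto
  ultimately show "\<exists>y. ((\<lambda>c. f S c) has_real_derivative y) (at c) \<and> 0 < y" by blast
qed

lemma Sstar_in_T:
  assumes "C \<in> {0..1}"
  shows "0 < Sstar f A C" and "Sstar f A C < 1" and "inT f A (Sstar f A C, C)"
proof -
  have "\<exists>!S. 0 < S \<and> S < 1 \<and> inT f A (S, C)"
    using transition_ok assms unfolding transition_ok_def by blast
  from theI' [OF this] show "0 < Sstar f A C" "Sstar f A C < 1" "inT f A (Sstar f A C, C)"
    unfolding Sstar_def by auto
qed

lemma Sstar_unique:
  assumes "C \<in> {0..1}" and "0 < S" "S < 1" and "inT f A (S, C)"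
  shows "S = Sstar f A C"
  using transition_ok assms Sstar_in_T [OF assms(1)] unfolding transition_ok_def by blast

lemma lamC_0: "C \<in> {0..1} \<Longrightarrow> lamC f A 0 C = 0"
  unfolding lamC_def by (simp add: f_0)

lemma lamC_pos:
  assumes "C \<in> {0..1}" and "0 < S" "S \<le> 1"
  shows "0 < lamC f A S C"
proof -
  have "f 0 C < f S C" using strict_mono_onD [OF f_strict_mono [OF assms(1)]] assms by simp
  then show ?thesis unfolding lamC_def using assms A_pos by (simp add: f_0 [OF assms(1)])
qed

lemma continuous_on_lamC: "C \<in> {0..1} \<Longrightarrow> continuous_on {0..1} (\<lambda>S. lamC f A S C)"
  unfolding lamC_def using A_pos by (intro continuous_intros continuous_on_f) auto

lemma has_lamC_derivative:
  assumes "C \<in> {0..1}" and "S \<in> {0..1}"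
  shows "((\<lambda>S. lamC f A S C) has_real_derivative (lamS f S C - lamC f A S C) / (S + A)) (at S)"
proof -
  have "S + A \<noteq> 0" using assms(2) A_pos by simp
  from DERIV_quotient [OF has_lamS_derivative [OF assms]
      DERIV_add [OF DERIV_ident DERIV_const] this]
  show ?thesis unfolding lamC_def using \<open>S + A \<noteq> 0\<close> by (simp add: field_simps power2_eq_square)
qed

lemma speed_gap_nonzero:
  assumes "C \<in> {0..1}" and "0 < S" "S < 1" and "S \<noteq> Sstar f A C"
  shows "lamS f S C - lamC f A S C \<noteq> 0"
  using Sstar_unique [OF assms(1-3)] assms(4) unfolding inT_def by auto

lemma inR_beyond_Sstar:
  assumes C: "C \<in> {0..1}" and S: "Sstar f A C < S" "S \<le> 1"
  shows "inR f A (S, C)"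
proof -
  let ?d = "\<lambda>z. lamS f z C - lamC f A z C"
  have "continuous_on {S..1} ?d"
    using S Sstar_in_T [OF C]
    by (intro continuous_intros continuous_on_subset [OF continuous_on_lamS [OF C]]
        continuous_on_subset [OF continuous_on_lamC [OF C]]) auto
  moreover have d_1: "?d 1 < 0"
    using A_pos unfolding lamC_def by (simp add: lamS_1 [OF C] f_1 [OF C])
  moreover have "\<forall>z\<in>{S..1}. ?d z \<noteq> 0"
    using speed_gap_nonzero [OF C] d_1 S Sstar_in_T [OF C]
    by (metis atLeastAtMost_iff le_less less_le_trans not_less_iff_gr_or_eq)
  ultimately show ?thesis
    using continuous_on_nonzero_same_sign [of S 1 ?d] S unfolding inR_def by force
qed

lemma inL_below_Sstar:
  assumes C: "C \<in> {0..1}" and S: "0 < S" "S < Sstar f A C"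
  shows "inL f A (S, C)"
proof (rule ccontr)
  let ?s = "Sstar f A C" and ?d = "\<lambda>z. lamS f z C - lamC f A z C"
  have s: "0 < ?s" "?s < 1" using Sstar_in_T [OF C] by auto
  have nonzero: "?d z \<noteq> 0" if "0 < z" "z < ?s" for z
    using speed_gap_nonzero [OF C] that s by simp
  assume "\<not> inL f A (S, C)"
  \<comment> \<open>then \<open>lamC\<close> would decrease on \<open>[0, S*]\<close>, from \<open>lamC 0 = 0\<close> to \<open>lamC S* > 0\<close>\<close>
  with nonzero [OF S] have "\<not> 0 < ?d S" unfolding inL_def by simp
  have neg: "?d z < 0" if z: "0 < z" "z < ?s" for z
  proof -
    have "continuous_on {min S z..max S z} ?d"
      using S z s
      by (intro continuous_intros continuous_on_subset [OF continuous_on_lamS [OF C]]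
          continuous_on_subset [OF continuous_on_lamC [OF C]]) auto
    moreover have "\<forall>y\<in>{min S z..max S z}. ?d y \<noteq> 0" using nonzero S z by auto
    ultimately have "0 < ?d (min S z) \<longleftrightarrow> 0 < ?d (max S z)"
      by (rule continuous_on_nonzero_same_sign [rotated]) simp
    with \<open>\<not> 0 < ?d S\<close> nonzero [OF z] show ?thesis by (cases "S \<le> z") auto
  qed
  have "lamC f A ?s C < lamC f A 0 C"
  proof (rule DERIV_neg_imp_decreasing_open [OF s(1)])
    fix z assume z: "0 < z" "z < ?s"
    have "?d z / (z + A) < 0" using neg [OF z] z A_pos by (simp add: divide_neg_pos)
    with has_lamC_derivative [OF C, of z] z s
    show "\<exists>y. ((\<lambda>S. lamC f A S C) has_real_derivative y) (at z) \<and> y < 0" by auto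
  qed (use s in \<open>auto intro: continuous_on_subset [OF continuous_on_lamC [OF C]]\<close>)
  with lamC_0 [OF C] lamC_pos [OF C s(1)] s show False by simp
qed

lemma lamC_strict_increasing:
  assumes C: "C \<in> {0..1}" and xy: "0 \<le> x" "x < y" "y \<le> Sstar f A C"
  shows "lamC f A x C < lamC f A y C"
proof (rule DERIV_pos_imp_increasing_open [OF xy(2)])
  have s: "Sstar f A C < 1" using Sstar_in_T [OF C] by simp
  fix z assume z: "x < z" "z < y"
  with xy have "0 < lamS f z C - lamC f A z C"
    using inL_below_Sstar [OF C, of z] unfolding inL_def by auto
  then have "0 < (lamS f z C - lamC f A z C) / (z + A)" using z xy A_pos by simp
  with has_lamC_derivative [OF C, of z] z xy s
  show "\<exists>d. ((\<lambda>S. lamC f A S C) has_real_derivative d) (at z) \<and> 0 < d" by auto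
next
  show "continuous_on {x..y} (\<lambda>S. lamC f A S C)"
    using xy Sstar_in_T [OF C] by (auto intro: continuous_on_subset [OF continuous_on_lamC [OF C]])
qed

lemma lamC_strict_decreasing:
  assumes C: "C \<in> {0..1}" and xy: "Sstar f A C \<le> x" "x < y" "y \<le> 1"
  shows "lamC f A y C < lamC f A x C"
proof (rule DERIV_neg_imp_decreasing_open [OF xy(2)])
  have s: "0 < Sstar f A C" using Sstar_in_T [OF C] by simp
  fix z assume z: "x < z" "z < y"
  with xy have "lamS f z C - lamC f A z C < 0"
    using inR_beyond_Sstar [OF C, of z] unfolding inR_def by auto
  then have "(lamS f z C - lamC f A z C) / (z + A) < 0"
    using z xy s A_pos by (simp add: divide_neg_pos)
  with has_lamC_derivative [OF C, of z] z xy s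
  show "\<exists>d. ((\<lambda>S. lamC f A S C) has_real_derivative d) (at z) \<and> d < 0" by auto
next
  show "continuous_on {x..y} (\<lambda>S. lamC f A S C)"
    using xy Sstar_in_T [OF C] by (auto intro: continuous_on_subset [OF continuous_on_lamC [OF C]])
qed

lemma lamC_le_peak:
  assumes "C \<in> {0..1}" and "S \<in> {0..1}"
  shows "lamC f A S C \<le> lamC f A (Sstar f A C) C"
  using lamC_strict_increasing [OF assms(1), of S "Sstar f A C"]
    lamC_strict_decreasing [OF assms(1), of "Sstar f A C" S] assms(2)
  by (cases "S < Sstar f A C"; cases "S = Sstar f A C") auto

lemma inT_0: "C \<in> {0..1} \<Longrightarrow> inT f A (0, C)"
  unfolding inT_def by (simp add: lamS_0 lamC_0)

lemma inL_iff:
  assumes "C \<in> {0..1}" and "S \<in> {0..1}"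
  shows "inL f A (S, C) \<longleftrightarrow> 0 < S \<and> S < Sstar f A C"
  using inL_below_Sstar [OF assms(1)] inR_beyond_Sstar [OF assms(1)] inT_0 [OF assms(1)]
    Sstar_in_T(3) [OF assms(1)] assms(2)
  unfolding inL_def inR_def inT_def
  by (metis atLeastAtMost_iff less_irrefl linorder_neqE_linordered_idom order.asym le_less)

lemma inR_iff:
  assumes "C \<in> {0..1}" and "S \<in> {0..1}"
  shows "inR f A (S, C) \<longleftrightarrow> Sstar f A C < S"
  using inL_below_Sstar [OF assms(1)] inR_beyond_Sstar [OF assms(1)] inT_0 [OF assms(1)]
    Sstar_in_T(3) [OF assms(1)] assms(2)
  unfolding inL_def inR_def inT_def
  by (metis atLeastAtMost_iff less_irrefl linorder_neqE_linordered_idom order.asym le_less)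

lemma inT_iff:
  assumes "C \<in> {0..1}" and "S \<in> {0..1}"
  shows "inT f A (S, C) \<longleftrightarrow> S = 0 \<or> S = Sstar f A C"
  using inL_iff [OF assms] inR_iff [OF assms] Sstar_in_T [OF assms(1)] assms(2)
  unfolding inL_def inR_def inT_def by auto

lemma lamC_lt_peak_of_less:
  assumes CL: "CL \<in> {0..1}" and CR: "CR \<in> {0..1}" and "CL < CR" and S: "S \<in> {0..1}"
  shows "lamC f A S CL < lamC f A (Sstar f A CR) CR"
proof -
  let ?s = "Sstar f A CL"
  have s: "0 < ?s" "?s < 1" using Sstar_in_T [OF CL] by auto
  have "lamC f A S CL \<le> lamC f A ?s CL" by (rule lamC_le_peak [OF CL S])
  also have "\<dots> < lamC f A ?s CR"
    using f_strict_mono_C [OF s CL CR \<open>CL < CR\<close>] s A_pos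
    unfolding lamC_def by (simp add: divide_strict_right_mono)
  also have "\<dots> \<le> lamC f A (Sstar f A CR) CR" by (rule lamC_le_peak [OF CR]) (use s in simp)
  finally show ?thesis .
qed

lemma Sstar_less_if_lamC_eq:
  assumes C: "C \<in> {0..1}" and S: "0 \<le> S" "S < Sstar f A C"
    and S': "S' \<in> {0..1}" "S' \<noteq> S" "lamC f A S' C = lamC f A S C"
  shows "Sstar f A C < S'"
proof (rule ccontr)
  assume "\<not> Sstar f A C < S'"
  with S S' lamC_strict_increasing [OF C, of S S'] lamC_strict_increasing [OF C, of S' S]
  show False by (cases "S < S'") auto
qed

lemma level_point_beyond_peak:
  assumes C: "C \<in> {0..1}" and S: "S \<in> {0..1}" and b: "Sstar f A C \<le> b" "b \<le> 1"
    and "lamC f A b C \<le> lamC f A S C"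
  obtains S' where "S' \<in> {Sstar f A C..b}" and "lamC f A S' C = lamC f A S C"
proof -
  have "continuous_on {Sstar f A C..b} (\<lambda>S. lamC f A S C)"
    using b Sstar_in_T [OF C] by (auto intro: continuous_on_subset [OF continuous_on_lamC [OF C]])
  from IVT2' [OF assms(5) lamC_le_peak [OF C S] b(1) this] that show ?thesis by auto
qed

lemma Sk_eq:
  assumes C: "C \<in> {0..1}" and S: "0 < S" "S < Sstar f A C"
    and S': "S' \<in> {0..1}" "S' \<noteq> S" "lamC f A S' C = lamC f A S C"
  shows "Sk f A (S, C) = ereal S'"
proof -
  have beyond: "Sstar f A C < S''"
    if "S'' \<in> {0..1}" "S'' \<noteq> S" "lamC f A S'' C = lamC f A S C" for S''
    using Sstar_less_if_lamC_eq [OF C _ S(2) that] S(1) by simp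
  have "S'' = S'" if "S'' \<in> {0..1} \<and> S'' \<noteq> S \<and> lamC f A S'' C = lamC f A S C" for S''
    using beyond [of S''] beyond [OF S'] that S' lamC_strict_decreasing [OF C, of S' S'']
      lamC_strict_decreasing [OF C, of S'' S']
    by (cases "S' < S''"; cases "S'' < S'") auto
  then have "(THE S''. S'' \<in> {0..1} \<and> S'' \<noteq> S \<and> lamC f A S'' C = lamC f A S C) = S'"
    using S' by (intro the_equality) auto
  moreover have "\<exists>S''\<in>{0..1}. S'' \<noteq> S \<and> lamC f A S'' C = lamC f A S C" using S' by blast
  moreover have "S \<noteq> Sstar f A C" using S by simp
  ultimately show ?thesis unfolding Sk_def Let_def fst_conv snd_conv by simp
qed

lemma Sk_eq_infinity:
  assumes "S \<noteq> Sstar f A C" and "\<not> (\<exists>S'\<in>{0..1}. S' \<noteq> S \<and> lamC f A S' C = lamC f A S C)"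
  shows "Sk f A (S, C) = \<infinity>"
  unfolding Sk_def Let_def fst_conv snd_conv using assms by simp

lemma less_Sk:
  assumes C: "C \<in> {0..1}" and S: "0 < S" "S < Sstar f A C"
  shows "ereal S < Sk f A (S, C)"
proof (cases "\<exists>S'\<in>{0..1}. S' \<noteq> S \<and> lamC f A S' C = lamC f A S C")
  case True
  then obtain S' where S': "S' \<in> {0..1}" "S' \<noteq> S" "lamC f A S' C = lamC f A S C" by blast
  with Sstar_less_if_lamC_eq [OF C _ S(2) S'] Sk_eq [OF C S S'] S show ?thesis by simp
qed (use Sk_eq_infinity S in auto)

lemma le_Sk_iff:
  assumes C: "C \<in> {0..1}" and S: "0 < S" "S < Sstar f A C" and b: "S < b" "b \<le> 1"
  shows "ereal b \<le> Sk f A (S, C) \<longleftrightarrow> lamC f A S C \<le> lamC f A b C"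
proof (cases "\<exists>S'\<in>{0..1}. S' \<noteq> S \<and> lamC f A S' C = lamC f A S C")
  case True
  then obtain S' where S': "S' \<in> {0..1}" "S' \<noteq> S" "lamC f A S' C = lamC f A S C" by blast
  have "Sstar f A C < S'" using Sstar_less_if_lamC_eq [OF C _ S(2) S'] S by simp
  then have "b \<le> S' \<longleftrightarrow> lamC f A S C \<le> lamC f A b C"
    using S' S b lamC_strict_increasing [OF C, of S b] lamC_strict_decreasing [OF C, of S' b]
      lamC_strict_decreasing [OF C, of b S'] lamC_strict_decreasing [OF C, of "Sstar f A C" b]
    by (cases "b \<le> Sstar f A C"; cases "b = S'"; cases "b < S'") auto
  with Sk_eq [OF C S S'] show ?thesis by simp
next
  case False
  have "lamC f A S C \<le> lamC f A b C"
  proof (rule ccontr)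
    assume lt: "\<not> lamC f A S C \<le> lamC f A b C"
    then have "Sstar f A C < b" using lamC_strict_increasing [OF C, of S b] S b by force
    moreover have "S \<in> {0..1}" using S Sstar_in_T [OF C] by auto
    moreover have "lamC f A b C \<le> lamC f A S C" using lt by simp
    ultimately obtain S' where S': "S' \<in> {Sstar f A C..b}" "lamC f A S' C = lamC f A S C"
      using level_point_beyond_peak [OF C _ _ b(2)] by (metis less_imp_le)
    moreover have "S' \<in> {0..1}" "S' \<noteq> S" using S'(1) S b Sstar_in_T [OF C] by auto
    ultimately show False using False by blast
  qed
  with Sk_eq_infinity [OF _ False] S show ?thesis by simp
qed

section \<open>Compatibility of S-waves with the contact speed\<close>

lemma lipschitz_on_segment:
  assumes "C \<in> {0..1}" and "a \<in> {0..1}" "b \<in> {0..1}"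
  obtains M where "M-lipschitz_on (closed_segment a b) (\<lambda>s. f s C)"
  using lipschitz_on_f [OF assms(1)] closed_segment_subset [OF assms(2,3) convex_real_interval(5)]
  by (meson lipschitz_on_subset)

lemma Swave_vf_le_lamC_iff:
  assumes C: "C \<in> {0..1}" and ab: "a \<in> {0..1}" "b \<in> {0..1}" "a \<noteq> b"
  shows "Swave_vf (\<lambda>s. f s C) a b \<le> lamC f A b C \<longleftrightarrow>
           (\<forall>S\<in>closed_segment a b - {b}. (lamC f A S C - lamC f A b C) * (S - b) \<le> 0)"
proof -
  obtain M where lip: "M-lipschitz_on (closed_segment a b) (\<lambda>s. f s C)"
    using lipschitz_on_segment [OF C ab(1,2)] .
  have "(f S C - f b C) / (S - b) \<le> lamC f A b C \<longleftrightarrow> (lamC f A S C - lamC f A b C) * (S - b) \<le> 0"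
    if "S \<in> closed_segment a b - {b}" for S
    using closed_segment_subset [OF ab(1,2) convex_real_interval(5)] that ab A_pos
    by (intro slope_le_lamC_iff) auto
  then show ?thesis unfolding Swave_vf_le_iff [OF ab(3) lip] by blast
qed

lemma lamC_le_Swave_vi_iff:
  assumes C: "C \<in> {0..1}" and ab: "a \<in> {0..1}" "b \<in> {0..1}" "a \<noteq> b"
  shows "lamC f A a C \<le> Swave_vi (\<lambda>s. f s C) a b \<longleftrightarrow>
           (\<forall>S\<in>closed_segment a b - {a}. 0 \<le> (lamC f A S C - lamC f A a C) * (S - a))"
proof -
  obtain M where lip: "M-lipschitz_on (closed_segment a b) (\<lambda>s. f s C)"
    using lipschitz_on_segment [OF C ab(1,2)] .
  have "lamC f A a C \<le> (f S C - f a C) / (S - a) \<longleftrightarrow> 0 \<le> (lamC f A S C - lamC f A a C) * (S - a)"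
    if "S \<in> closed_segment a b - {a}" for S
    using closed_segment_subset [OF ab(1,2) convex_real_interval(5)] that ab A_pos
    by (intro lamC_le_slope_iff) auto
  then show ?thesis unfolding le_Swave_vi_iff [OF ab(3) lip] by blast
qed

lemma Sstar_le_if_Swave_vf_le_lamC:
  assumes C: "C \<in> {0..1}" and ab: "a \<in> {0..1}" "b \<in> {0..1}" "a \<noteq> b"
    and "Swave_vf (\<lambda>s. f s C) a b \<le> lamC f A b C"
  shows "Sstar f A C \<le> b"
proof (rule ccontr)
  assume "\<not> Sstar f A C \<le> b"
  then have b: "b < Sstar f A C" by simp
  have nonpos: "(lamC f A S C - lamC f A b C) * (S - b) \<le> 0" if "S \<in> closed_segment a b - {b}" for S
    using that assms Swave_vf_le_lamC_iff [OF C ab] by blast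
  show False
  proof (cases "a < b")
    case True
    have "lamC f A a C < lamC f A b C" by (rule lamC_strict_increasing) (use C ab True b in auto)
    with True have "0 < (lamC f A a C - lamC f A b C) * (a - b)" by (intro mult_neg_neg) auto
    with nonpos [of a] True show False by simp
  next
    case False
    let ?S = "min a (Sstar f A C)"
    have "?S \<in> closed_segment a b - {b}" "b < ?S"
      using False ab b by (auto simp: closed_segment_eq_real_ivl)
    moreover have "lamC f A b C < lamC f A ?S C"
      by (rule lamC_strict_increasing) (use C ab False b in auto)
    ultimately show False
      using nonpos [of ?S] mult_pos_pos [of "lamC f A ?S C - lamC f A b C" "?S - b"] by linarith
  qed
qed

lemma Swave_vf_le_lamC_Sstar_iff:
  assumes C: "C \<in> {0..1}" and a: "a \<in> {0..1}" "a \<noteq> Sstar f A C"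
  shows "Swave_vf (\<lambda>s. f s C) a (Sstar f A C) \<le> lamC f A (Sstar f A C) C \<longleftrightarrow> Sstar f A C < a"
proof -
  let ?s = "Sstar f A C"
  have s: "?s \<in> {0..1}" using Sstar_in_T [OF C] by simp
  have "(\<forall>S\<in>closed_segment a ?s - {?s}. (lamC f A S C - lamC f A ?s C) * (S - ?s) \<le> 0) \<longleftrightarrow> ?s < a"
  proof
    assume nonpos: "\<forall>S\<in>closed_segment a ?s - {?s}. (lamC f A S C - lamC f A ?s C) * (S - ?s) \<le> 0"
    show "?s < a"
    proof (rule ccontr)
      assume "\<not> ?s < a"
      with a have "a < ?s" by simp
      moreover have "lamC f A a C < lamC f A ?s C"
        by (rule lamC_strict_increasing) (use C a \<open>a < ?s\<close> in auto)
      ultimately have "0 < (lamC f A a C - lamC f A ?s C) * (a - ?s)" by (intro mult_neg_neg) auto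
      moreover have "a \<in> closed_segment a ?s - {?s}" using \<open>a < ?s\<close> by simp
      then have "(lamC f A a C - lamC f A ?s C) * (a - ?s) \<le> 0" by (rule bspec [OF nonpos])
      ultimately show False by linarith
    qed
  next
    assume "?s < a"
    then show "\<forall>S\<in>closed_segment a ?s - {?s}. (lamC f A S C - lamC f A ?s C) * (S - ?s) \<le> 0"
      using lamC_le_peak [OF C] a s by (auto simp: closed_segment_eq_real_ivl mult_le_0_iff)
  qed
  then show ?thesis using Swave_vf_le_lamC_iff [OF C a(1) s a(2)] by simp
qed

lemma le_Sstar_if_lamC_le_Swave_vi:
  assumes C: "C \<in> {0..1}" and ab: "a \<in> {0..1}" "b \<in> {0..1}" "a \<noteq> b"
    and "lamC f A a C \<le> Swave_vi (\<lambda>s. f s C) a b"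
  shows "a \<le> Sstar f A C"
proof (rule ccontr)
  assume "\<not> a \<le> Sstar f A C"
  then have a: "Sstar f A C < a" by simp
  have nonneg: "0 \<le> (lamC f A S C - lamC f A a C) * (S - a)" if "S \<in> closed_segment a b - {a}" for S
    using that assms lamC_le_Swave_vi_iff [OF C ab] by blast
  show False
  proof (cases "a < b")
    case True
    have "lamC f A b C < lamC f A a C" by (rule lamC_strict_decreasing) (use C ab True a in auto)
    with True have "(lamC f A b C - lamC f A a C) * (b - a) < 0" by (intro mult_neg_pos) auto
    with nonneg [of b] True show False by simp
  next
    case False
    let ?S = "max b (Sstar f A C)"
    have "?S \<in> closed_segment a b - {a}" "?S < a"
      using False ab a by (auto simp: closed_segment_eq_real_ivl)
    moreover have "lamC f A a C < lamC f A ?S C"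
      by (rule lamC_strict_decreasing) (use C ab False a in auto)
    ultimately show False
      using nonneg [of ?S] mult_pos_neg [of "lamC f A ?S C - lamC f A a C" "?S - a"] by linarith
  qed
qed

lemma lamC_le_Swave_vi_iff_le_Sk:
  assumes C: "C \<in> {0..1}" and a: "0 < a" "a < Sstar f A C" and b: "b \<in> {0..1}" "a \<noteq> b"
  shows "lamC f A a C \<le> Swave_vi (\<lambda>s. f s C) a b \<longleftrightarrow> ereal b \<le> Sk f A (a, C)"
proof -
  have a01: "a \<in> {0..1}" using a Sstar_in_T [OF C] by simp
  show ?thesis
  proof (cases "b < a")
    case True
    have "0 \<le> (lamC f A S C - lamC f A a C) * (S - a)" if "S \<in> closed_segment a b - {a}" for S
    proof -
      have "S < a" "0 \<le> S" using that True b by (auto simp: closed_segment_eq_real_ivl)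
      with lamC_strict_increasing [OF C, of S a] a show ?thesis by (simp add: zero_le_mult_iff)
    qed
    moreover have "ereal b \<le> Sk f A (a, C)"
      using less_Sk [OF C a] True by (metis ereal_less_eq(3) less_imp_le order.trans)
    ultimately show ?thesis using lamC_le_Swave_vi_iff [OF C a01 b] by simp
  next
    case False
    with b have ab: "a < b" by simp
    have "(\<forall>S\<in>closed_segment a b - {a}. 0 \<le> (lamC f A S C - lamC f A a C) * (S - a))
            \<longleftrightarrow> lamC f A a C \<le> lamC f A b C"
    proof
      assume "\<forall>S\<in>closed_segment a b - {a}. 0 \<le> (lamC f A S C - lamC f A a C) * (S - a)"
      then have "0 \<le> (lamC f A b C - lamC f A a C) * (b - a)" using ab by simp
      with ab show "lamC f A a C \<le> lamC f A b C" by (simp add: zero_le_mult_iff)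
    next
      assume ab_lam: "lamC f A a C \<le> lamC f A b C"
      have "lamC f A a C \<le> lamC f A S C" if S: "a < S" "S \<le> b" for S
        using lamC_strict_increasing [OF C, of a S] lamC_strict_decreasing [OF C, of S b]
          ab_lam S a b
        by (cases "S \<le> Sstar f A C"; cases "S = b") auto
      then show "\<forall>S\<in>closed_segment a b - {a}. 0 \<le> (lamC f A S C - lamC f A a C) * (S - a)"
        using ab by (auto simp: closed_segment_eq_real_ivl)
    qed
    then show ?thesis using lamC_le_Swave_vi_iff [OF C a01 b] le_Sk_iff [OF C a ab] b by simp
  qed
qed

lemma SCS_speeds_ordered_imp_regions:
  assumes CL: "CL \<in> {0..1}" and CR: "CR \<in> {0..1}" and "CL < CR"
    and S: "SL \<in> {0..1}" "S1 \<in> {0..1}" "S2 \<in> {0..1}" "SR \<in> {0..1}" "SL \<noteq> S1" "S2 \<noteq> SR"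
    and adm: "adm_Cwave f A (S1, CL) (S2, CR)"
    and vf: "Swave_vf (\<lambda>s. f s CL) SL S1 \<le> lamC f A S1 CL"
    and vi: "lamC f A S2 CR \<le> Swave_vi (\<lambda>s. f s CR) S2 SR"
  shows "inR f A (SL, CL) \<and> inT f A (S1, CL) \<and> inL f A (S2, CR) \<and> ereal SR \<le> Sk f A (S2, CR)"
proof -
  have lam: "lamC f A S2 CR = lamC f A S1 CL" using adm unfolding adm_Cwave_def by simp
  have sL: "Sstar f A CL \<le> S1" by (rule Sstar_le_if_Swave_vf_le_lamC [OF CL S(1,2,5) vf])
  have "0 < lamC f A S2 CR" using lam lamC_pos [OF CL, of S1] sL Sstar_in_T [OF CL] S(2) by simp
  then have "S2 \<noteq> 0" using lamC_0 [OF CR] by auto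
  moreover have "S2 \<le> Sstar f A CR" by (rule le_Sstar_if_lamC_le_Swave_vi [OF CR S(3,4,6) vi])
  moreover have "S2 \<noteq> Sstar f A CR" using lamC_lt_peak_of_less [OF CL CR \<open>CL < CR\<close> S(2)] lam by auto
  ultimately have L2: "inL f A (S2, CR)" using inL_iff [OF CR S(3)] S(3) by simp
  have "\<not> inL f A (S1, CL)" using inL_iff [OF CL S(2)] sL by simp
  with adm L2 have T1: "inT f A (S1, CL)" unfolding adm_Cwave_def inL_def inR_def inT_def by auto
  then have S1: "S1 = Sstar f A CL" using inT_iff [OF CL S(2)] sL Sstar_in_T [OF CL] by auto
  have "inR f A (SL, CL)"
    using Swave_vf_le_lamC_Sstar_iff [OF CL S(1)] vf S(5) inR_iff [OF CL S(1)] unfolding S1 by auto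
  moreover have "ereal SR \<le> Sk f A (S2, CR)"
    using lamC_le_Swave_vi_iff_le_Sk [OF CR _ _ S(4,6)] vi L2 inL_iff [OF CR S(3)] by auto
  ultimately show ?thesis using T1 L2 by simp
qed

lemma regions_imp_SCS_speeds_ordered:
  assumes CL: "CL \<in> {0..1}" and CR: "CR \<in> {0..1}"
    and S: "SL \<in> {0..1}" "S1 \<in> {0..1}" "S2 \<in> {0..1}" "SR \<in> {0..1}" "SL \<noteq> S1" "S2 \<noteq> SR"
    and lam: "lamC f A S2 CR = lamC f A S1 CL"
    and R: "inR f A (SL, CL)" and T: "inT f A (S1, CL)" and L: "inL f A (S2, CR)"
    and Sk: "ereal SR \<le> Sk f A (S2, CR)"
  shows "Swave_vf (\<lambda>s. f s CL) SL S1 \<le> lamC f A S1 CL \<and>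
         lamC f A S2 CR \<le> Swave_vi (\<lambda>s. f s CR) S2 SR"
proof
  have S2: "0 < S2" "S2 < Sstar f A CR" using L inL_iff [OF CR S(3)] by auto
  then have "S1 \<noteq> 0" using lam lamC_pos [OF CR S2(1)] lamC_0 [OF CL] S(3) by auto
  then have S1: "S1 = Sstar f A CL" using T inT_iff [OF CL S(2)] by simp
  show "Swave_vf (\<lambda>s. f s CL) SL S1 \<le> lamC f A S1 CL"
    using Swave_vf_le_lamC_Sstar_iff [OF CL S(1)] R inR_iff [OF CL S(1)] unfolding S1 by auto
  show "lamC f A S2 CR \<le> Swave_vi (\<lambda>s. f s CR) S2 SR"
    using lamC_le_Swave_vi_iff_le_Sk [OF CR S2 S(4,6)] Sk by simp
qed

end

theorem lemma3p3:
  fixes f :: "real \<Rightarrow> real \<Rightarrow> real" and A SL CL S1 S2 SR CR :: real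
  assumes "A > 0" and "flux_ok f" and "transition_ok f A"
    and "SL \<in> {0..1}" "S1 \<in> {0..1}" "S2 \<in> {0..1}" "SR \<in> {0..1}"
    and "CL \<in> {0..1}" "CR \<in> {0..1}"
    and "CL < CR"
    and "(SL, CL) \<noteq> (SR, CR)"
    and "SL \<noteq> S1" and "S2 \<noteq> SR"
    and "adm_Cwave f A (S1, CL) (S2, CR)"
  shows "compatible_SCS f A (SL, CL) (S1, CL) (S2, CR) (SR, CR) \<longleftrightarrow>
           inR f A (SL, CL) \<and> inT f A (S1, CL) \<and> inL f A (S2, CR) \<and>
           0 \<le> SR \<and> ereal SR \<le> Sk f A (S2, CR)"
proof -
  \<comment> \<open>The hypothesis \<open>(SL, CL) \<noteq> (SR, CR)\<close> already follows from \<open>CL < CR\<close>.\<close>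
  interpret flux f A using assms(1-3) by unfold_locales
  have lam: "lamC f A S2 CR = lamC f A S1 CL" using assms(14) unfolding adm_Cwave_def by simp
  have "compatible_SCS f A (SL, CL) (S1, CL) (S2, CR) (SR, CR) \<longleftrightarrow>
      Swave_vf (\<lambda>s. f s CL) SL S1 \<le> lamC f A S1 CL \<and> lamC f A S2 CR \<le> Swave_vi (\<lambda>s. f s CR) S2 SR"
    unfolding compatible_SCS_def using lam by simp
  then show ?thesis
    using SCS_speeds_ordered_imp_regions [OF assms(8-10,4-7,12-14)]
      regions_imp_SCS_speeds_ordered [OF assms(8,9,4-7,12,13) lam] assms(7)
    by auto
qed

end
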